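(* Let $(\Omega,\mathcal{F},(\mathcal{F}_t)_{t\ge 0},\mathbb{P})$ be a filtered probability space, let $n\ge 1$, and for each $k\in\{1,\dots,n\}$ let $(B^{(k)}_t)_{t\ge 0}$ be a standard $(\mathcal{F}_t)$-Brownian motion (adapted to $(\mathcal{F}_t)$, with $B^{(k)}_{t+s}-B^{(k)}_t$ independent of $\mathcal{F}_t$ for all $s,t\ge 0$), let $a_k,\sigma_k\in\mathbb{R}$, and set $X^{*(k)}_t=\sigma_k tB^{(k)}_t + a_k t$ (so $X^{*(k)}_0=0$ and $X^{*(k)}_t$ is $\mathcal{F}_t$-measurable). Let $c_1,\dots,c_n\in\mathbb{R}$ be arbitrary constants and put $S_t=\sum_{k=1}^n c_k X^{*(k)}_t$. Then for every $t>0$ with $S_t\neq 0$ and every $s\ge 0$, $$E(S_{t+s}-S_t\mid\mathcal{F}_t)=\frac{s}{t}S_t\quad\text{a.s.},$$ i.e. $(S_t)_{t>0}$ is a process with proportional increments.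
   Context: A process $(N_t)_{t>0}$ adapted to a filtration $(\mathcal{F}_t)$ has proportional increments if for all $t>0$ with $N_t\neq 0$ and all $s\ge 0$: $E(N_{t+s}-N_t\mid\mathcal{F}_t)=\frac{s}{t}N_t$ almost surely. *)

theory Defs
  imports "HOL-Probability.Probability"
begin

definition filtered_prob_space :: "'a measure \<Rightarrow> (real \<Rightarrow> 'a measure) \<Rightarrow> bool" where
  "filtered_prob_space M F \<longleftrightarrow>
     prob_space M \<and>
     (\<forall>t\<ge>0. subalgebra M (F t)) \<and>
     (\<forall>s t. 0 \<le> s \<longrightarrow> s \<le> t \<longrightarrow> sets (F s) \<subseteq> sets (F t))"

definition std_F_brownian_motion ::
  "'a measure \<Rightarrow> (real \<Rightarrow> 'a measure) \<Rightarrow> (real \<Rightarrow> 'a \<Rightarrow> real) \<Rightarrow> bool" where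
  "std_F_brownian_motion M F B \<longleftrightarrow>
     (\<forall>t\<ge>0. B t \<in> borel_measurable (F t)) \<and>
     (AE \<omega> in M. B 0 \<omega> = 0) \<and>
     (AE \<omega> in M. continuous_on {0..} (\<lambda>t. B t \<omega>)) \<and>
     (\<forall>t\<ge>0. \<forall>s>0. distributed M lborel (\<lambda>\<omega>. B (t + s) \<omega> - B t \<omega>)
                                   (normal_density 0 (sqrt s))) \<and>
     (\<forall>t\<ge>0. \<forall>s\<ge>0. prob_space.indep_set M (sets (F t))
        (sets (vimage_algebra (space M) (\<lambda>\<omega>. B (t + s) \<omega> - B t \<omega>) borel)))"

definition proportional_increments ::
  "'a measure \<Rightarrow> (real \<Rightarrow> 'a measure) \<Rightarrow> (real \<Rightarrow> 'a \<Rightarrow> real) \<Rightarrow> bool" where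
  "proportional_increments M F N \<longleftrightarrow>
     (\<forall>t>0. N t \<in> borel_measurable (F t)) \<and>
     (\<forall>t>0. \<forall>s\<ge>0. (\<exists>\<omega>\<in>space M. N t \<omega> \<noteq> 0) \<longrightarrow>
        (AE \<omega> in M. real_cond_exp M (F t) (\<lambda>x. N (t + s) x - N t x) \<omega> = s / t * N t \<omega>))"

end

(*
  The drift part is linear in t, and
  \<sigma> (t + s) B_(t+s) - \<sigma> t B_t = (s/t) \<sigma> t B_t + \<sigma> (t + s) (B_(t+s) - B_t), so
  S_(t+s) - S_t = (s/t) S_t + \<Sum>k c_k \<sigma>_k (t + s) (B_(t+s)^(k) - B_t^(k)).
  The first summand is F_t-measurable; each Brownian increment is independent of F_t
  and centred, so its conditional expectation given F_t vanishes.
*)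
theory Submission
  imports Defs
begin

lemma (in prob_space) normal_distributed_integrable:
  assumes "0 < \<sigma>" "distributed M lborel X (normal_density \<mu> \<sigma>)"
  shows "integrable M X"
  using assms(2) normal_density_nonneg integrable_normal_moment_nz_1[OF assms(1)] by (rule distributed_integrable_var)

lemma (in prob_space) sigma_finite_subalgebra_of_subalgebra:
  assumes "subalgebra M F"
  shows "sigma_finite_subalgebra M F"
  using assms prob_space_axioms
  by (intro finite_measure_subalgebra_is_sigma_finite)
     (simp add: finite_measure_subalgebra_def finite_measure_subalgebra_axioms_def finite_measure_axioms)

lemma (in prob_space) indep_var_indicator:
  fixes X :: "'a \<Rightarrow> real"
  assumes "subalgebra M F" "A \<in> sets F" "random_variable borel X"
    and "indep_set (sets F) (sets (vimage_algebra (space M) X borel))"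
  shows "indep_var borel (indicator A :: 'a \<Rightarrow> real) borel X"
proof -
  have space_F: "space F = space M" and A: "A \<in> events"
    using assms(1,2) by (auto simp: subalgebra_def)
  have "sets (vimage_algebra (space M) (indicator A :: 'a \<Rightarrow> real) borel) \<subseteq> sets F"
    using space_F assms(2) by (intro sets_image_in_sets) auto
  then have "indep_set (sets (vimage_algebra (space M) (indicator A :: 'a \<Rightarrow> real) borel))
                       (sets (vimage_algebra (space M) X borel))"
    using assms(4) unfolding indep_sets2_eq by blast
  then show ?thesis
    using A assms(3) by (simp add: indep_var_eq sets_vimage_algebra)
qed

lemma (in prob_space) real_cond_exp_indep:
  fixes X :: "'a \<Rightarrow> real"
  assumes F: "subalgebra M F" and X: "integrable M X"
    and indep: "indep_set (sets F) (sets (vimage_algebra (space M) X borel))"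
  shows "AE x in M. real_cond_exp M F X x = expectation X"
proof -
  interpret sigma_finite_subalgebra M F
    using F by (rule sigma_finite_subalgebra_of_subalgebra)
  show ?thesis
  proof (rule real_cond_exp_charact)
    fix A assume A: "A \<in> sets F"
    then have "A \<in> events"
      using F by (auto simp: subalgebra_def)
    have "(\<integral>x\<in>A. X x \<partial>M) = expectation (\<lambda>x. indicator A x * X x)"
      by (simp add: set_lebesgue_integral_def)
    also have "\<dots> = expectation (indicator A) * expectation X"
      using \<open>A \<in> events\<close> X
      by (intro indep_var_lebesgue_integral indep_var_indicator[OF F A _ indep])
         (auto simp: emeasure_eq_measure)
    also have "\<dots> = (\<integral>x\<in>A. expectation X \<partial>M)"
      using \<open>A \<in> events\<close> by (simp add: set_lebesgue_integral_def)
    finally show "(\<integral>x\<in>A. X x \<partial>M) = (\<integral>x\<in>A. expectation X \<partial>M)" .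
  qed (use X in auto)
qed

lemma (in sigma_finite_subalgebra) real_cond_exp_sum_on:
  fixes f :: "'b \<Rightarrow> 'a \<Rightarrow> real"
  assumes "\<And>i. i \<in> I \<Longrightarrow> integrable M (f i)"
  shows "AE x in M. real_cond_exp M F (\<lambda>x. \<Sum>i\<in>I. f i x) x = (\<Sum>i\<in>I. real_cond_exp M F (f i) x)"
proof -
  \<comment> \<open>the library lemma real_cond_exp_sum needs integrability of every f i, also for i \<notin> I\<close>
  let ?g = "\<lambda>i. if i \<in> I then f i else (\<lambda>_. 0)"
  have "AE x in M. real_cond_exp M F (\<lambda>x. \<Sum>i\<in>I. ?g i x) x = (\<Sum>i\<in>I. real_cond_exp M F (?g i) x)"
    using assms by (intro real_cond_exp_sum) auto
  then show ?thesis
    by simp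
qed

lemma (in sigma_finite_subalgebra) real_cond_exp_add_centered_sum:
  fixes Z :: "'a \<Rightarrow> real" and Y :: "'b \<Rightarrow> 'a \<Rightarrow> real"
  assumes Z: "integrable M Z" "Z \<in> borel_measurable F" and "finite I"
    and Y: "\<And>i. i \<in> I \<Longrightarrow> integrable M (Y i)"
    and centered: "\<And>i. i \<in> I \<Longrightarrow> AE x in M. real_cond_exp M F (Y i) x = 0"
  shows "AE x in M. real_cond_exp M F (\<lambda>x. Z x + (\<Sum>i\<in>I. w i * Y i x)) x = Z x"
proof -
  have "AE x in M. real_cond_exp M F (\<lambda>x. Z x + (\<Sum>i\<in>I. w i * Y i x)) x
                  = real_cond_exp M F Z x + real_cond_exp M F (\<lambda>x. \<Sum>i\<in>I. w i * Y i x) x"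
    using Z Y by (intro real_cond_exp_add) auto
  moreover have "AE x in M. real_cond_exp M F Z x = Z x"
    using Z by (rule real_cond_exp_F_meas)
  moreover have "AE x in M. real_cond_exp M F (\<lambda>x. \<Sum>i\<in>I. w i * Y i x) x
                  = (\<Sum>i\<in>I. real_cond_exp M F (\<lambda>x. w i * Y i x) x)"
    using Y by (intro real_cond_exp_sum_on) auto
  moreover have "AE x in M. \<forall>i\<in>I. real_cond_exp M F (\<lambda>x. w i * Y i x) x = 0"
  proof (subst AE_finite_all[OF \<open>finite I\<close>], intro ballI)
    fix i assume "i \<in> I"
    have "AE x in M. real_cond_exp M F (\<lambda>x. w i * Y i x) x = w i * real_cond_exp M F (Y i) x"
      using Y[OF \<open>i \<in> I\<close>] by (rule real_cond_exp_cmult)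
    with centered[OF \<open>i \<in> I\<close>] show "AE x in M. real_cond_exp M F (\<lambda>x. w i * Y i x) x = 0"
      by eventually_elim auto
  qed
  ultimately show ?thesis
    by eventually_elim simp
qed

lemma proportional_increment_decomposition:
  fixes t s :: real and I :: "'k set" and a \<sigma> c x y :: "'k \<Rightarrow> real"
  assumes "t \<noteq> 0"
  defines "S \<equiv> \<lambda>t z. \<Sum>k\<in>I. c k * (\<sigma> k * t * z k + a k * t)"
  shows "S (t + s) y - S t x = s / t * S t x + (\<Sum>k\<in>I. c k * \<sigma> k * (t + s) * (y k - x k))"
proof -
  have "S (t + s) y - S t x - s / t * S t x
      = (\<Sum>k\<in>I. c k * (\<sigma> k * (t + s) * y k + a k * (t + s))
                 - c k * (\<sigma> k * t * x k + a k * t) - s / t * (c k * (\<sigma> k * t * x k + a k * t)))"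
    unfolding S_def by (simp add: sum_subtractf sum_distrib_left)
  also have "\<dots> = (\<Sum>k\<in>I. c k * \<sigma> k * (t + s) * (y k - x k))"
    using assms by (intro sum.cong refl) (simp add: divide_simps; simp add: algebra_simps)
  finally show ?thesis
    by simp
qed

lemma filtered_prob_space_subalgebra:
  "filtered_prob_space M F \<Longrightarrow> 0 \<le> t \<Longrightarrow> subalgebra M (F t)"
  by (simp add: filtered_prob_space_def)

lemma std_F_brownian_motion_adapted:
  "std_F_brownian_motion M F B \<Longrightarrow> 0 \<le> t \<Longrightarrow> B t \<in> borel_measurable (F t)"
  by (simp add: std_F_brownian_motion_def)

lemma std_F_brownian_motion_increment_normal:
  "std_F_brownian_motion M F B \<Longrightarrow> 0 \<le> t \<Longrightarrow> 0 < s \<Longrightarrow>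
     distributed M lborel (\<lambda>\<omega>. B (t + s) \<omega> - B t \<omega>) (normal_density 0 (sqrt s))"
  unfolding std_F_brownian_motion_def by blast

lemma std_F_brownian_motion_increment_integrable:
  assumes "filtered_prob_space M F" "std_F_brownian_motion M F B" "0 \<le> t" "0 \<le> s"
  shows "integrable M (\<lambda>\<omega>. B (t + s) \<omega> - B t \<omega>)"
proof (cases "s = 0")
  case False
  interpret prob_space M
    using assms(1) by (simp add: filtered_prob_space_def)
  show ?thesis
    using False assms(4) std_F_brownian_motion_increment_normal[OF assms(2,3)]
    by (intro normal_distributed_integrable[of "sqrt s" _ 0]) auto
qed simp

lemma std_F_brownian_motion_cond_exp_increment:
  assumes FP: "filtered_prob_space M F" and BM: "std_F_brownian_motion M F B"
    and "0 \<le> t" "0 \<le> s"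
  shows "AE \<omega> in M. real_cond_exp M (F t) (\<lambda>\<omega>. B (t + s) \<omega> - B t \<omega>) \<omega> = 0"
proof -
  interpret prob_space M
    using FP by (simp add: filtered_prob_space_def)
  let ?D = "\<lambda>\<omega>. B (t + s) \<omega> - B t \<omega>"
  have "indep_set (sets (F t)) (sets (vimage_algebra (space M) ?D borel))"
    using BM \<open>0 \<le> t\<close> \<open>0 \<le> s\<close> unfolding std_F_brownian_motion_def by blast
  moreover have "subalgebra M (F t)" "integrable M ?D"
    using assms by (auto intro: filtered_prob_space_subalgebra std_F_brownian_motion_increment_integrable)
  ultimately have "AE \<omega> in M. real_cond_exp M (F t) ?D \<omega> = expectation ?D"
    by (intro real_cond_exp_indep)
  moreover have "expectation ?D = 0"
  proof (cases "s = 0")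
    case False
    then show ?thesis
      using \<open>0 \<le> s\<close> std_F_brownian_motion_increment_normal[OF BM \<open>0 \<le> t\<close>]
      by (intro normal_distributed_expectation[of "sqrt s"]) auto
  qed simp
  ultimately show ?thesis
    by simp
qed

lemma std_F_brownian_motion_integrable:
  assumes FP: "filtered_prob_space M F" and BM: "std_F_brownian_motion M F B" and "0 \<le> t"
  shows "integrable M (B t)"
proof -
  have B0_zero: "AE \<omega> in M. B 0 \<omega> = 0"
    using BM by (simp add: std_F_brownian_motion_def)
  have "B 0 \<in> borel_measurable M"
    using std_F_brownian_motion_adapted[OF BM order_refl]
    by (rule measurable_from_subalg[OF filtered_prob_space_subalgebra[OF FP order_refl]])
  then have "integrable M (B 0)"
    using integrable_cong_AE[OF _ borel_measurable_const B0_zero] by simp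
  moreover have "integrable M (\<lambda>\<omega>. B (0 + t) \<omega> - B 0 \<omega>)"
    using assms by (intro std_F_brownian_motion_increment_integrable) auto
  ultimately have "integrable M (\<lambda>\<omega>. (B (0 + t) \<omega> - B 0 \<omega>) + B 0 \<omega>)"
    by (intro Bochner_Integration.integrable_add)
  then show ?thesis
    by simp
qed

lemma std_F_brownian_motion_cond_exp_add_increments:
  fixes Z :: "'a \<Rightarrow> real" and B :: "'k \<Rightarrow> real \<Rightarrow> 'a \<Rightarrow> real"
  assumes FP: "filtered_prob_space M F" and "finite I"
    and BM: "\<And>k. k \<in> I \<Longrightarrow> std_F_brownian_motion M F (B k)"
    and "0 \<le> t" "0 \<le> s" and Z: "integrable M Z" "Z \<in> borel_measurable (F t)"
  shows "AE \<omega> in M. real_cond_exp M (F t) (\<lambda>\<omega>. Z \<omega> + (\<Sum>k\<in>I. w k * (B k (t + s) \<omega> - B k t \<omega>))) \<omega>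
           = Z \<omega>"
proof -
  interpret prob_space M
    using FP by (simp add: filtered_prob_space_def)
  interpret sigma_finite_subalgebra M "F t"
    using FP \<open>0 \<le> t\<close> by (intro sigma_finite_subalgebra_of_subalgebra filtered_prob_space_subalgebra)
  show ?thesis
    using Z \<open>finite I\<close>
  proof (rule real_cond_exp_add_centered_sum)
    fix k assume "k \<in> I"
    then show "integrable M (\<lambda>\<omega>. B k (t + s) \<omega> - B k t \<omega>)"
      and "AE \<omega> in M. real_cond_exp M (F t) (\<lambda>\<omega>. B k (t + s) \<omega> - B k t \<omega>) \<omega> = 0"
      using FP BM \<open>0 \<le> t\<close> \<open>0 \<le> s\<close>
      by (auto intro: std_F_brownian_motion_increment_integrable std_F_brownian_motion_cond_exp_increment)
  qed
qed

theorem mainTheorem4: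
  fixes M :: "'a measure" and F :: "real \<Rightarrow> 'a measure"
    and n :: nat and B :: "nat \<Rightarrow> real \<Rightarrow> 'a \<Rightarrow> real"
    and a \<sigma> c :: "nat \<Rightarrow> real"
  assumes "filtered_prob_space M F"
    and "n \<ge> 1"
    and "\<And>k. k \<in> {1..n} \<Longrightarrow> std_F_brownian_motion M F (B k)"
  shows "proportional_increments M F
           (\<lambda>t \<omega>. \<Sum>k = 1..n. c k * (\<sigma> k * t * B k t \<omega> + a k * t))"
proof -
  note FP = assms(1) and BM = assms(3)
  interpret prob_space M
    using FP by (simp add: filtered_prob_space_def)
  define S where "S = (\<lambda>t \<omega>. \<Sum>k = 1..n. c k * (\<sigma> k * t * B k t \<omega> + a k * t))"
  have S_adapted: "S t \<in> borel_measurable (F t)" if "0 \<le> t" for t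
    using std_F_brownian_motion_adapted[OF BM] that unfolding S_def by auto
  have S_integrable: "integrable M (S t)" if "0 \<le> t" for t
    using std_F_brownian_motion_integrable[OF FP BM] that unfolding S_def
    by (auto intro!: Bochner_Integration.integrable_sum Bochner_Integration.integrable_add)
  have "AE \<omega> in M. real_cond_exp M (F t) (\<lambda>\<omega>. S (t + s) \<omega> - S t \<omega>) \<omega> = s / t * S t \<omega>"
    if "0 < t" "0 \<le> s" for t s
  proof -
    have increment: "(\<lambda>\<omega>. S (t + s) \<omega> - S t \<omega>)
        = (\<lambda>\<omega>. s / t * S t \<omega> + (\<Sum>k = 1..n. c k * \<sigma> k * (t + s) * (B k (t + s) \<omega> - B k t \<omega>)))"
      unfolding S_def using \<open>0 < t\<close> by (intro ext proportional_increment_decomposition) simp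
    show ?thesis
      unfolding increment using FP BM that S_integrable S_adapted
      by (intro std_F_brownian_motion_cond_exp_add_increments) auto
  qed
  then show ?thesis
    using S_adapted unfolding proportional_increments_def S_def[symmetric] by auto
qed

end
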